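(* Let $s=(x_0,x_1,\dots,x_d,y)$ be a sample with features $x=(x_0,\dots,x_d)\in\mathbb{R}^{d+1}$ and label $y\in\{0,1\}$, and let $\lambda=(\lambda_1,\dots,\lambda_d)\in[0,1)^d$ with RIM augmentation $s_\lambda=(x_{0,\lambda_0},\dots,x_{d,\lambda_d},y)$. Let $f_\theta$ be a neural network with ReLU activations and sigmoid output, $f_\theta(x)=\sigma(g_\theta(x))$, where the last-layer pre-activation is $g_\theta(x)=\nabla g_\theta^T x+b$ with $\nabla g_\theta\in\mathbb{R}^{d+1}$ the gradient of $g_\theta$ with respect to the input. Let $l$ be the binary cross-entropy loss $l(s,\theta)=-\big(y\log f_\theta(x)+(1-y)\log(1-f_\theta(x))\big)$. Then $$\|l(s_\lambda,\theta)-l(s,\theta)\|\le\sqrt{d}\Big(\|A\|_F+\sum_{i=1}^d\|B_i\|_F\Big)\|\nabla g_\theta\|,$$ where $\|\cdot\|_F$ is the Frobenius norm, $\|\nabla g_\theta\|$ the Euclidean norm, and $A,B_1,\dots,B_d$ are the $(d+1)\times(d+1)$ matrices whose first row and first column are zero and whose lower-right $d\times d$ blocks have entry in row $j$, column $r$ ($1\le j,r\le d$) equal to $\frac{\partial x_{r,\lambda_r}}{\partial\lambda_j}\big|_{\lambda=\vec 0}$ for $A$ and $\frac{\partial^2 x_{r,\lambda_r}}{\partial\lambda_i\partial\lambda_j}\big|_{\lambda=\vec 0}$ for $B_i$ (these entries vanish for $r<j$).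
   Context: RIM augmentation: $x_{0,\lambda_0}=x_0$ and $x_{j,\lambda_j}=(1-\lambda_j)x_j+\lambda_j x_{j-1,\lambda_{j-1}}$ for $j=1,\dots,d$; the augmented sample keeps the label $y$. The matrix $A$ is interpreted as the "velocity" and the $B_i$ as the "accelerations" of the augmented features with respect to the interpolation coefficients. $\sigma(t)=1/(1+e^{-t})$. *)

theory Defs
  imports "HOL-Analysis.Analysis"
begin

text \<open>Vectors in R^(d+1) are represented as functions nat => real, indices 0..d.\<close>

fun rim :: "(nat \<Rightarrow> real) \<Rightarrow> (nat \<Rightarrow> real) \<Rightarrow> nat \<Rightarrow> real" where
  "rim x lam 0 = x 0"
| "rim x lam (Suc j) = (1 - lam (Suc j)) * x (Suc j) + lam (Suc j) * rim x lam j"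

definition partial_at :: "((nat \<Rightarrow> real) \<Rightarrow> real) \<Rightarrow> nat \<Rightarrow> (nat \<Rightarrow> real) \<Rightarrow> real" where
  "partial_at F j p = deriv (\<lambda>t. F (p(j := t))) (p j)"

definition partial2_at :: "((nat \<Rightarrow> real) \<Rightarrow> real) \<Rightarrow> nat \<Rightarrow> nat \<Rightarrow> (nat \<Rightarrow> real) \<Rightarrow> real" where
  "partial2_at F i j p = partial_at (\<lambda>q. partial_at F j q) i p"

definition velA :: "(nat \<Rightarrow> real) \<Rightarrow> nat \<Rightarrow> nat \<Rightarrow> nat \<Rightarrow> real" where
  "velA x d j r = (if 1 \<le> j \<and> j \<le> d \<and> 1 \<le> r \<and> r \<le> d
      then partial_at (\<lambda>lam. rim x lam r) j (\<lambda>_. 0) else 0)"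

definition accB :: "(nat \<Rightarrow> real) \<Rightarrow> nat \<Rightarrow> nat \<Rightarrow> nat \<Rightarrow> nat \<Rightarrow> real" where
  "accB x d i j r = (if 1 \<le> j \<and> j \<le> d \<and> 1 \<le> r \<and> r \<le> d
      then partial2_at (\<lambda>lam. rim x lam r) i j (\<lambda>_. 0) else 0)"

definition frob :: "nat \<Rightarrow> (nat \<Rightarrow> nat \<Rightarrow> real) \<Rightarrow> real" where
  "frob d M = sqrt (\<Sum>j\<le>d. \<Sum>r\<le>d. (M j r)\<^sup>2)"

definition vnorm :: "nat \<Rightarrow> (nat \<Rightarrow> real) \<Rightarrow> real" where
  "vnorm d w = sqrt (\<Sum>k\<le>d. (w k)\<^sup>2)"

definition sigmoid :: "real \<Rightarrow> real" where
  "sigmoid t = 1 / (1 + exp (- t))"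

definition bce :: "real \<Rightarrow> real \<Rightarrow> real" where
  "bce y p = - (y * ln p + (1 - y) * ln (1 - p))"

end

theory Submission
  imports Defs
begin

text \<open>As a function of the pre-activation t, the loss is t \<mapsto> ln (1 + exp (\<plusminus>t)),
  which is 1-Lipschitz, and the pre-activation moves by \<langle>w, x_\<lambda> - x\<rangle>, to which
  coordinate 0 does not contribute. Because every \<lambda>_j lies in [0,1), each augmented
  coordinate stays within the total variation V = \<Sum>_i |x_(i-1) - x_i| of its original value,
  and Cauchy-Schwarz gives \<Sum>_(k\<ge>1) |w_k| \<le> \<surd>d \<parallel>w\<parallel>. Finally V is dominated by single
  matrix entries: both A_(r,r) and (B_(r-1))_(r,r) equal x_(r-1) - x_r, and we use A_(d,d) together
  with (B_i)_(i+1,i+1) for i < d.\<close>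

fun rim_partial :: "(nat \<Rightarrow> real) \<Rightarrow> (nat \<Rightarrow> real) \<Rightarrow> nat \<Rightarrow> nat \<Rightarrow> real" where
  "rim_partial x q j 0 = 0"
| "rim_partial x q j (Suc r) =
    (if j = Suc r then rim x q r - x (Suc r) else q (Suc r) * rim_partial x q j r)"

lemma rim_fun_upd_above: "r < j \<Longrightarrow> rim x (q(j := t)) r = rim x q r"
  by (induction r) auto

lemma rim_zero: "rim x (\<lambda>_. 0) r = x r"
  by (induction r) auto

lemma has_real_derivative_rim:
  "((\<lambda>t. rim x (q(j := t)) r) has_real_derivative rim_partial x q j r) (at t0)"
proof (induction r)
  case 0
  then show ?case by simp
next
  case (Suc r)
  show ?case
  proof (cases "j = Suc r")
    case True
    then have "(\<lambda>t. rim x (q(j := t)) (Suc r)) = (\<lambda>t. (1 - t) * x (Suc r) + t * rim x q r)"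
      by (auto simp: rim_fun_upd_above)
    with True show ?thesis
      by (simp only:) (auto intro!: derivative_eq_intros)
  next
    case False
    then have "(\<lambda>t. rim x (q(j := t)) (Suc r))
        = (\<lambda>t. (1 - q (Suc r)) * x (Suc r) + q (Suc r) * rim x (q(j := t)) r)"
      by auto
    with False show ?thesis
      by (simp only:) (auto intro!: derivative_eq_intros Suc)
  qed
qed

lemma partial_at_rim: "partial_at (\<lambda>lam. rim x lam r) j q = rim_partial x q j r"
  unfolding partial_at_def by (rule DERIV_imp_deriv[OF has_real_derivative_rim])

lemma velA_diag:
  assumes "1 \<le> r" "r \<le> d"
  shows "velA x d r r = x (r - 1) - x r"
proof -
  obtain m where "r = Suc m" using assms by (cases r) auto
  with assms show ?thesis
    unfolding velA_def partial_at_rim by (simp add: rim_zero)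
qed

lemma accB_diag_Suc:
  assumes "1 \<le> i" "Suc i \<le> d"
  shows "accB x d i (Suc i) (Suc i) = x (i - 1) - x i"
proof -
  obtain m where i: "i = Suc m" using assms by (cases i) auto
  have inner: "partial_at (\<lambda>lam. rim x lam (Suc i)) (Suc i) q = rim x q i - x (Suc i)" for q
    unfolding partial_at_rim by simp
  have "((\<lambda>t. rim x ((\<lambda>_. 0)(i := t)) i - x (Suc i))
      has_real_derivative rim_partial x (\<lambda>_. 0) i i) (at 0)"
    by (auto intro!: derivative_eq_intros has_real_derivative_rim)
  then have "accB x d i (Suc i) (Suc i) = rim_partial x (\<lambda>_. 0) i i"
    using assms unfolding accB_def partial2_at_def partial_at_def[of "\<lambda>q. partial_at _ _ q"] inner
    by (simp add: DERIV_imp_deriv)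
  also have "\<dots> = x (i - 1) - x i"
    using i by (simp add: rim_zero)
  finally show ?thesis .
qed

lemma frob_nonneg: "0 \<le> frob d M"
  unfolding frob_def by (auto intro!: sum_nonneg)

lemma abs_entry_le_frob:
  assumes "j \<le> d" "r \<le> d"
  shows "\<bar>M j r\<bar> \<le> frob d M"
proof -
  have "(M j r)\<^sup>2 \<le> (\<Sum>r\<le>d. (M j r)\<^sup>2)"
    by (rule member_le_sum) (use assms in auto)
  also have "\<dots> \<le> (\<Sum>j\<le>d. \<Sum>r\<le>d. (M j r)\<^sup>2)"
    by (rule member_le_sum[where f = "\<lambda>j. \<Sum>r\<le>d. (M j r)\<^sup>2"])
      (use assms in \<open>auto intro: sum_nonneg\<close>)
  finally show ?thesis
    unfolding frob_def by (metis real_sqrt_abs real_sqrt_le_mono)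
qed

lemma total_variation_le_frob:
  "(\<Sum>i=1..d. \<bar>x (i - 1) - x i\<bar>) \<le> frob d (velA x d) + (\<Sum>i=1..d. frob d (accB x d i))"
proof (cases d)
  case 0
  then show ?thesis by (simp add: frob_nonneg)
next
  case (Suc m)
  have "(\<Sum>i=1..m. \<bar>x (i - 1) - x i\<bar>) \<le> (\<Sum>i=1..m. frob d (accB x d i))"
  proof (rule sum_mono)
    fix i assume "i \<in> {1..m}"
    with Suc show "\<bar>x (i - 1) - x i\<bar> \<le> frob d (accB x d i)"
      using abs_entry_le_frob[of "Suc i" d "Suc i" "accB x d i"] accB_diag_Suc[of i d x] by simp
  qed
  moreover have "\<bar>x m - x d\<bar> \<le> frob d (velA x d)"
    using abs_entry_le_frob[of d d d "velA x d"] velA_diag[of d d x] Suc by simp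
  moreover have "(\<Sum>i=1..m. frob d (accB x d i)) \<le> (\<Sum>i=1..d. frob d (accB x d i))"
    using Suc by (simp add: frob_nonneg)
  ultimately show ?thesis
    using Suc by simp
qed

lemma abs_rim_diff_le_total_variation:
  assumes "\<forall>j\<in>{1..d}. 0 \<le> lam j \<and> lam j < 1" "k \<le> d"
  shows "\<bar>rim x lam k - x k\<bar> \<le> (\<Sum>i=1..k. \<bar>x (i - 1) - x i\<bar>)"
  using assms(2)
proof (induction k)
  case 0
  then show ?case by simp
next
  case (Suc k)
  have lam: "0 \<le> lam (Suc k)" "lam (Suc k) < 1"
    using assms(1) Suc.prems by auto
  have "rim x lam (Suc k) - x (Suc k) = lam (Suc k) * ((rim x lam k - x k) + (x k - x (Suc k)))"
    by (simp add: algebra_simps)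
  then have "\<bar>rim x lam (Suc k) - x (Suc k)\<bar> = lam (Suc k) * \<bar>(rim x lam k - x k) + (x k - x (Suc k))\<bar>"
    using lam by (simp add: abs_mult)
  also have "\<dots> \<le> \<bar>(rim x lam k - x k) + (x k - x (Suc k))\<bar>"
    using lam by (intro mult_left_le_one_le) auto
  also have "\<dots> \<le> \<bar>rim x lam k - x k\<bar> + \<bar>x k - x (Suc k)\<bar>"
    by (rule abs_triangle_ineq)
  also have "\<dots> \<le> (\<Sum>i=1..k. \<bar>x (i - 1) - x i\<bar>) + \<bar>x k - x (Suc k)\<bar>"
    using Suc by simp
  finally show ?case by simp
qed

lemma ln_one_plus_exp_lipschitz:
  fixes u v :: real
  shows "\<bar>ln (1 + exp u) - ln (1 + exp v)\<bar> \<le> \<bar>u - v\<bar>"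
proof -
  have mono: "0 \<le> ln (1 + exp u) - ln (1 + exp v) \<and> ln (1 + exp u) - ln (1 + exp v) \<le> u - v"
    if "v \<le> u" for u v :: real
  proof
    have pos: "0 < 1 + exp v" by (simp add: add_pos_nonneg)
    with that show "0 \<le> ln (1 + exp u) - ln (1 + exp v)"
      by (simp add: add_pos_nonneg)
    have "1 + exp u \<le> exp (u - v) * (1 + exp v)"
      using that by (simp add: distrib_left exp_diff field_simps)
    then have "ln (1 + exp u) \<le> ln (exp (u - v) * (1 + exp v))"
      using pos by (subst ln_le_cancel_iff) (auto intro: add_pos_pos)
    also have "\<dots> = (u - v) + ln (1 + exp v)"
      using pos by (simp add: ln_mult)
    finally show "ln (1 + exp u) - ln (1 + exp v) \<le> u - v" by simp
  qed
  show ?thesis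
    using mono[of v u] mono[of u v] by linarith
qed

lemma bce_sigmoid_lipschitz:
  assumes "y \<in> {0, 1}"
  shows "\<bar>bce y (sigmoid u) - bce y (sigmoid v)\<bar> \<le> \<bar>u - v\<bar>"
proof -
  have pos: "0 < 1 + exp t" for t :: real
    by (simp add: add_pos_nonneg)
  have "1 - sigmoid t = 1 / (1 + exp t)" for t
    unfolding sigmoid_def using pos[of t] pos[of "-t"]
    by (simp add: field_simps exp_minus)
  then have bce0: "bce 0 (sigmoid t) = ln (1 + exp t)" for t
    unfolding bce_def by (simp add: ln_div pos)
  have bce1: "bce 1 (sigmoid t) = ln (1 + exp (- t))" for t
    unfolding bce_def sigmoid_def by (simp add: ln_div pos)
  from assms show ?thesis
    using ln_one_plus_exp_lipschitz[of u v] ln_one_plus_exp_lipschitz[of "-u" "-v"]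
    by (auto simp: bce0 bce1)
qed

lemma sum_abs_le_sqrt_vnorm: "(\<Sum>k=1..d. \<bar>w k\<bar>) \<le> sqrt (real d) * vnorm d w"
proof -
  have "(\<Sum>k=1..d. \<bar>w k\<bar>)\<^sup>2 \<le> (\<Sum>k=1..d. (w k)\<^sup>2) * real d"
    using sum_squared_le_sum_of_squares[of "\<lambda>k. \<bar>w k\<bar>" "{1..d}"] by simp
  also have "\<dots> \<le> (\<Sum>k\<le>d. (w k)\<^sup>2) * real d"
    by (intro mult_right_mono sum_mono2) auto
  finally have "(\<Sum>k=1..d. \<bar>w k\<bar>) \<le> sqrt ((\<Sum>k\<le>d. (w k)\<^sup>2) * real d)"
    by (meson real_le_rsqrt)
  then show ?thesis
    unfolding vnorm_def by (simp add: real_sqrt_mult mult.commute)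
qed

theorem theorem3:
  fixes d :: nat and x w lam :: "nat \<Rightarrow> real" and y b :: real
    and g :: "(nat \<Rightarrow> real) \<Rightarrow> real"
  assumes "y \<in> {0, 1}"
    and "\<forall>j\<in>{1..d}. 0 \<le> lam j \<and> lam j < 1"
    and "\<forall>z. g z = (\<Sum>k\<le>d. w k * z k) + b"
  shows "\<bar>bce y (sigmoid (g (\<lambda>k. rim x lam k))) - bce y (sigmoid (g x))\<bar>
     \<le> sqrt (real d) * (frob d (velA x d) + (\<Sum>i=1..d. frob d (accB x d i))) * vnorm d w"
proof -
  define V where "V = (\<Sum>i=1..d. \<bar>x (i - 1) - x i\<bar>)"
  have coord: "\<bar>rim x lam k - x k\<bar> \<le> V" if "k \<in> {1..d}" for k
  proof -
    have "(\<Sum>i=1..k. \<bar>x (i - 1) - x i\<bar>) \<le> V"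
      unfolding V_def by (rule sum_mono2) (use that in auto)
    then show ?thesis
      using abs_rim_diff_le_total_variation[OF assms(2), of k x] that by simp
  qed
  have "{..d} = insert 0 {1..d}" by auto
  then have preactivation: "g (\<lambda>k. rim x lam k) - g x = (\<Sum>k=1..d. w k * (rim x lam k - x k))"
    using assms(3) by (simp add: sum_subtractf[symmetric] algebra_simps)
  have "\<bar>bce y (sigmoid (g (\<lambda>k. rim x lam k))) - bce y (sigmoid (g x))\<bar>
      \<le> \<bar>\<Sum>k=1..d. w k * (rim x lam k - x k)\<bar>"
    using bce_sigmoid_lipschitz[OF assms(1), of "g (rim x lam)" "g x"] by (simp only: preactivation)
  also have "\<dots> \<le> (\<Sum>k=1..d. \<bar>w k\<bar>) * V"
    using coord by (auto simp: abs_mult sum_distrib_right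
        intro!: order_trans[OF sum_abs] sum_mono mult_left_mono)
  also have "\<dots> \<le> (sqrt (real d) * vnorm d w) * (frob d (velA x d) + (\<Sum>i=1..d. frob d (accB x d i)))"
    using sum_abs_le_sqrt_vnorm total_variation_le_frob[of x d, folded V_def]
    by (rule mult_mono) (auto simp: V_def vnorm_def intro!: mult_nonneg_nonneg sum_nonneg)
  finally show ?thesis
    by (simp only: ac_simps)
qed

end
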